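(* Let $\mathbf{A}$ be an $n\times n$ skew-symmetric matrix with real entries and let $\mathbf{v}\in\mathbb{R}^n$. Then the polynomial \[\sum_{I\subseteq[n]}\det\bigl((\mathbf{A}+\mathbf{v}\mathbf{v}^T)[I]\bigr)\prod_{i\in I}z_i\in\mathbb{C}[z_1,\dots,z_n]\] is Hurwitz stable.
   Context: $\mathbf{M}[I]$ is the principal submatrix indexed by $I$, with $\det(\mathbf{M}[\emptyset])=1$. Skew-symmetric: $\mathbf{A}_{ij}=-\mathbf{A}_{ji}$, $\mathbf{A}_{ii}=0$. A polynomial $f\in\mathbb{C}[z_1,\dots,z_n]$ is Hurwitz stable if $f(z_1,\dots,z_n)\ne0$ whenever $\mathrm{Re}(z_i)>0$ for all $i$. *)

theory Defs
  imports "HOL-Analysis.Analysis"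
begin

text \<open>Determinant of the principal submatrix M[I], written out via the Leibniz
  formula (the same formula that defines det), permutations of the index set I.
  For I = {} this is 1.\<close>
definition principal_minor :: "real^'n^'n \<Rightarrow> 'n set \<Rightarrow> real" where
  "principal_minor M I =
     (\<Sum>p\<in>{p. p permutes I}. of_int (sign p) * (\<Prod>i\<in>I. M $ i $ (p i)))"

definition skew_symmetric :: "real^'n^'n \<Rightarrow> bool" where
  "skew_symmetric A \<longleftrightarrow> (\<forall>i j. A $ i $ j = - A $ j $ i)"

definition hurwitz_stable :: "(('n \<Rightarrow> complex) \<Rightarrow> complex) \<Rightarrow> bool" where
  "hurwitz_stable f \<longleftrightarrow> (\<forall>z. (\<forall>i. 0 < Re (z i)) \<longrightarrow> f z \<noteq> 0)"

end

theory Submission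
  imports Defs
begin

text \<open>With Z = diag z the polynomial is det (1 + Z M), where M = A + v v^T, as one sees by
  expanding the determinant along the diagonal. If (1 + Z M) x = 0 with x \<noteq> 0, then y = M x
  satisfies y_i = - x_i / z_i, so Re (x^* M x) = - \<Sum>_i |x_i|^2 Re (1 / z_i) < 0 when all Re z_i > 0.
  But the skew part A contributes nothing to Re (x^* M x), and v v^T contributes |v^T x|^2 \<ge> 0.
  So det (1 + Z M) \<noteq> 0 for every real M whose form x^* M x has nonnegative real part.\<close>

lemma prod_delta_plus_eq_sum_permutes:
  fixes w :: "'a \<Rightarrow> 'b::comm_semiring_1"
  assumes "finite S" and p: "p permutes S"
  shows "(\<Prod>i\<in>S. (if p i = i then 1 else 0) + w i) =
    (\<Sum>X\<in>Pow S. if p permutes X then \<Prod>i\<in>X. w i else 0)"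
proof -
  have fixed_outside: "(\<Prod>i\<in>S - X. if p i = i then 1 else 0 :: 'b) = (if p permutes X then 1 else 0)"
    for X
  proof -
    have "p permutes X \<longleftrightarrow> (\<forall>i\<in>S - X. p i = i)"
      using p by (auto simp: permutes_def)
    then show ?thesis
      using assms(1) by (cases "p permutes X") (auto intro!: prod_zero)
  qed
  have "(\<Prod>i\<in>S. (if p i = i then 1 else 0) + w i) = (\<Prod>i\<in>S. w i + (if p i = i then 1 else 0))"
    by (simp add: add.commute)
  also have "\<dots> = (\<Sum>X\<in>Pow S. (\<Prod>i\<in>X. w i) * (\<Prod>i\<in>S - X. if p i = i then 1 else 0))"
    by (rule prod_add) (rule assms)
  also have "\<dots> = (\<Sum>X\<in>Pow S. if p permutes X then \<Prod>i\<in>X. w i else 0)"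
    by (intro sum.cong refl) (simp add: fixed_outside)
  finally show ?thesis .
qed

lemma det_one_plus_diag_mult_eq_sum_principal_minor:
  fixes M :: "real^'n::finite^'n" and z :: "'n \<Rightarrow> complex"
  shows "det (mat 1 + (\<chi> i j. z i * of_real (M $ i $ j))) =
    (\<Sum>I\<in>Pow UNIV. of_real (principal_minor M I) * (\<Prod>i\<in>I. z i))"
proof -
  let ?w = "\<lambda>p i. z i * of_real (M $ i $ p i)"
  let ?term = "\<lambda>p X. of_int (sign p) * (\<Prod>i\<in>X. ?w p i)"
  have "det (mat 1 + (\<chi> i j. z i * of_real (M $ i $ j))) =
      (\<Sum>p\<in>{p. p permutes UNIV}. of_int (sign p) * (\<Prod>i\<in>UNIV. (if p i = i then 1 else 0) + ?w p i))"
    unfolding det_def by (intro sum.cong refl arg_cong2[where f = "(*)"] prod.cong) (auto simp: mat_def)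
  also have "\<dots> = (\<Sum>p\<in>{p. p permutes UNIV}. \<Sum>X\<in>Pow UNIV. if p permutes X then ?term p X else 0)"
    by (intro sum.cong refl)
      (auto simp: prod_delta_plus_eq_sum_permutes sum_distrib_left intro!: sum.cong)
  also have "\<dots> = (\<Sum>X\<in>Pow UNIV. \<Sum>p\<in>{p. p permutes UNIV}. if p permutes X then ?term p X else 0)"
    by (rule sum.swap)
  also have "\<dots> = (\<Sum>X\<in>Pow UNIV. \<Sum>p\<in>{p. p permutes X}. ?term p X)"
  proof (rule sum.cong[OF refl])
    fix X :: "'n set"
    have filter: "(\<Sum>p\<in>{p. p permutes UNIV}. if p permutes X then ?term p X else 0) =
        (\<Sum>p\<in>{p \<in> {p. p permutes UNIV}. p permutes X}. ?term p X)"
      by (rule sum.inter_filter[symmetric]) (simp add: finite_permutations)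
    have "{p \<in> {p. p permutes UNIV}. p permutes X} = {p. p permutes X}"
      using permutes_subset by blast
    with filter show "(\<Sum>p\<in>{p. p permutes UNIV}. if p permutes X then ?term p X else 0) =
        (\<Sum>p\<in>{p. p permutes X}. ?term p X)"
      by (simp only:)
  qed
  also have "\<dots> = (\<Sum>I\<in>Pow UNIV. of_real (principal_minor M I) * (\<Prod>i\<in>I. z i))"
    unfolding principal_minor_def of_real_sum sum_distrib_right
    by (intro sum.cong refl) (simp add: prod.distrib of_real_prod)
  finally show ?thesis .
qed

definition cquad_form :: "real^'n^'n \<Rightarrow> complex^'n \<Rightarrow> complex" where
  "cquad_form M x = (\<Sum>i\<in>UNIV. \<Sum>j\<in>UNIV. cnj (x $ i) * of_real (M $ i $ j) * x $ j)"

lemma cquad_form_add: "cquad_form (A + B) x = cquad_form A x + cquad_form B x"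
  by (simp add: cquad_form_def sum.distrib algebra_simps)

lemma Re_cquad_form_skew_symmetric:
  assumes "skew_symmetric A"
  shows "Re (cquad_form A x) = 0"
proof -
  let ?T = "\<Sum>i\<in>UNIV. \<Sum>j\<in>UNIV. A $ i $ j * Re (cnj (x $ i) * x $ j)"
  have Re_eq: "Re (cquad_form A x) = ?T"
    unfolding cquad_form_def Re_sum by (intro sum.cong refl) (simp add: algebra_simps)
  have "?T = (\<Sum>j\<in>UNIV. \<Sum>i\<in>UNIV. A $ i $ j * Re (cnj (x $ i) * x $ j))"
    by (rule sum.swap)
  also have "\<dots> = (\<Sum>j\<in>UNIV. \<Sum>i\<in>UNIV. - (A $ j $ i * Re (cnj (x $ j) * x $ i)))"
  proof (intro sum.cong refl)
    fix i j
    have "A $ i $ j = - A $ j $ i"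
      using assms unfolding skew_symmetric_def by blast
    then show "A $ i $ j * Re (cnj (x $ i) * x $ j) = - (A $ j $ i * Re (cnj (x $ j) * x $ i))"
      by (simp add: algebra_simps)
  qed
  also have "\<dots> = - ?T"
    by (simp add: sum_negf)
  finally show ?thesis
    using Re_eq by simp
qed

lemma cquad_form_outer:
  "cquad_form (\<chi> i j. v $ i * v $ j) x = of_real ((cmod (\<Sum>j\<in>UNIV. of_real (v $ j) * x $ j))\<^sup>2)"
proof -
  let ?s = "\<Sum>j\<in>UNIV. of_real (v $ j) * x $ j"
  have "cquad_form (\<chi> i j. v $ i * v $ j) x = cnj ?s * ?s"
    unfolding cquad_form_def cnj_sum sum_product by (intro sum.cong refl) simp
  also have "\<dots> = ?s * cnj ?s"
    by (rule mult.commute)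
  finally show ?thesis
    by (simp only: complex_norm_square)
qed

lemma Re_cquad_form_skew_plus_outer_nonneg:
  assumes "skew_symmetric A"
  shows "0 \<le> Re (cquad_form (A + (\<chi> i j. v $ i * v $ j)) x)"
  by (simp add: cquad_form_add cquad_form_outer Re_cquad_form_skew_symmetric[OF assms])

lemma det_one_plus_diag_mult_nonzero:
  fixes M :: "real^'n::finite^'n" and z :: "'n \<Rightarrow> complex"
  assumes accretive: "\<And>x. 0 \<le> Re (cquad_form M x)" and z: "\<And>i. 0 < Re (z i)"
  shows "det (mat 1 + (\<chi> i j. z i * of_real (M $ i $ j))) \<noteq> 0"
proof
  let ?B = "mat 1 + (\<chi> i j. z i * of_real (M $ i $ j))"
  assume "det ?B = 0"
  then have "\<not> invertible ?B"
    by (simp add: invertible_det_nz)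
  then obtain x where "x \<noteq> 0" and kernel: "?B *v x = 0"
    unfolding invertible_left_inverse matrix_left_invertible_ker by blast
  then obtain k where "x $ k \<noteq> 0"
    by (metis vec_eq_iff zero_index)
  define y where "y i = (\<Sum>j\<in>UNIV. of_real (M $ i $ j) * x $ j)" for i
  have kernel_row: "x $ i + z i * y i = 0" for i
    using kernel[THEN arg_cong[where f = "\<lambda>u. u $ i"]]
    by (simp add: y_def matrix_vector_mult_def mat_def distrib_right sum.distrib sum_distrib_left mult.assoc
        if_distrib[where f = "\<lambda>c. c * _"] cong: if_cong)
  have z_nonzero: "z i \<noteq> 0" for i
    using z[of i] by auto
  have "cnj (x $ i) * y i = - of_real ((cmod (x $ i))\<^sup>2) / z i" for i
  proof -
    from kernel_row[of i] z_nonzero[of i] have "y i = - x $ i / z i"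
      by (simp add: field_simps add_eq_0_iff)
    then show ?thesis
      unfolding complex_norm_square by (simp add: mult.commute)
  qed
  then have Re_term: "Re (cnj (x $ i) * y i) = - ((cmod (x $ i))\<^sup>2 * Re (z i) / (cmod (z i))\<^sup>2)" for i
    by (simp add: Re_divide' del: of_real_power)
  have "cquad_form M x = (\<Sum>i\<in>UNIV. cnj (x $ i) * y i)"
    by (simp add: cquad_form_def y_def sum_distrib_left mult.assoc)
  then have "Re (cquad_form M x) = (\<Sum>i\<in>UNIV. Re (cnj (x $ i) * y i))"
    by (simp only: Re_sum)
  also have "\<dots> = - (\<Sum>i\<in>UNIV. (cmod (x $ i))\<^sup>2 * Re (z i) / (cmod (z i))\<^sup>2)"
    by (simp only: Re_term sum_negf)
  also have "\<dots> < 0"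
  proof -
    have "0 < (\<Sum>i\<in>UNIV. (cmod (x $ i))\<^sup>2 * Re (z i) / (cmod (z i))\<^sup>2)"
      using \<open>x $ k \<noteq> 0\<close> z z_nonzero
      by (intro sum_pos2[where i = k]) (auto simp: zero_less_divide_iff zero_le_divide_iff less_imp_le)
    then show ?thesis by simp
  qed
  finally show False
    using accretive[of x] by simp
qed

theorem lemma4p4:
  fixes A :: "real^'n::finite^'n" and v :: "real^'n"
  assumes "skew_symmetric A"
  shows "hurwitz_stable (\<lambda>z. \<Sum>I\<in>Pow (UNIV :: 'n set).
           complex_of_real (principal_minor (A + (\<chi> i j. v $ i * v $ j)) I) * (\<Prod>i\<in>I. z i))"
  unfolding hurwitz_stable_def det_one_plus_diag_mult_eq_sum_principal_minor[symmetric]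
  using det_one_plus_diag_mult_nonzero[OF Re_cquad_form_skew_plus_outer_nonneg[OF assms]]
  by blast

end
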